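(* Let $\tilde{\mathfrak{g}}$ be a real solvable Lie algebra with an Einstein metric $\langle,\rangle$, $\widetilde{\operatorname{Ric}}=\lambda\,\mathrm{id}$ with $\lambda\neq0$, admitting a pseudo-Iwasawa decomposition $\tilde{\mathfrak g}=\mathfrak{g}\oplus^\perp\mathfrak{a}$. Then $\mathfrak{g}$ is the nilradical of $\tilde{\mathfrak{g}}$.
   Context: A metric on a Lie algebra is a nondegenerate symmetric bilinear form, possibly indefinite; the Ricci operator is that of the corresponding left-invariant pseudo-Riemannian metric on the simply connected Lie group. A pseudo-Iwasawa decomposition of a metric Lie algebra $\tilde{\mathfrak g}$ is an orthogonal direct sum of vector spaces $\tilde{\mathfrak{g}}=\mathfrak{g}\oplus^\perp\mathfrak{a}$ with $\mathfrak{g}$ a nilpotent ideal, $\mathfrak{a}$ an abelian subalgebra, and $\operatorname{ad}X$ self-adjoint with respect to the metric for every $X\in\mathfrak a$. *)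

theory Defs
  imports "HOL-Analysis.Analysis"
begin

text \<open>Finite-dimensional real Lie algebras are modelled on a type of class euclidean_space
(the built-in inner product of that type plays no role except to compute traces);
the bracket is an explicit operation br.\<close>

definition lie_algebra :: "('a::real_vector \<Rightarrow> 'a \<Rightarrow> 'a) \<Rightarrow> bool" where
  "lie_algebra br \<longleftrightarrow> bilinear br \<and> (\<forall>x. br x x = 0) \<and>
     (\<forall>x y z. br x (br y z) + br y (br z x) + br z (br x y) = 0)"

definition lie_subalgebra :: "('a::real_vector \<Rightarrow> 'a \<Rightarrow> 'a) \<Rightarrow> 'a set \<Rightarrow> bool" where
  "lie_subalgebra br S \<longleftrightarrow> subspace S \<and> (\<forall>x\<in>S. \<forall>y\<in>S. br x y \<in> S)"

definition lie_ideal :: "('a::real_vector \<Rightarrow> 'a \<Rightarrow> 'a) \<Rightarrow> 'a set \<Rightarrow> bool" where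
  "lie_ideal br S \<longleftrightarrow> subspace S \<and> (\<forall>x y. y \<in> S \<longrightarrow> br x y \<in> S)"

definition abelian_set :: "('a::real_vector \<Rightarrow> 'a \<Rightarrow> 'a) \<Rightarrow> 'a set \<Rightarrow> bool" where
  "abelian_set br S \<longleftrightarrow> (\<forall>x\<in>S. \<forall>y\<in>S. br x y = 0)"

fun lower_central :: "('a::real_vector \<Rightarrow> 'a \<Rightarrow> 'a) \<Rightarrow> 'a set \<Rightarrow> nat \<Rightarrow> 'a set" where
  "lower_central br S 0 = S"
| "lower_central br S (Suc k) = span {br x y | x y. x \<in> S \<and> y \<in> lower_central br S k}"

definition nilpotent_set :: "('a::real_vector \<Rightarrow> 'a \<Rightarrow> 'a) \<Rightarrow> 'a set \<Rightarrow> bool" where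
  "nilpotent_set br S \<longleftrightarrow> (\<exists>k. lower_central br S k = {0})"

fun derived_series :: "('a::real_vector \<Rightarrow> 'a \<Rightarrow> 'a) \<Rightarrow> 'a set \<Rightarrow> nat \<Rightarrow> 'a set" where
  "derived_series br S 0 = S"
| "derived_series br S (Suc k) =
     span {br x y | x y. x \<in> derived_series br S k \<and> y \<in> derived_series br S k}"

definition solvable_lie :: "('a::real_vector \<Rightarrow> 'a \<Rightarrow> 'a) \<Rightarrow> bool" where
  "solvable_lie br \<longleftrightarrow> (\<exists>k. derived_series br UNIV k = {0})"

definition nilpotent_ideal :: "('a::real_vector \<Rightarrow> 'a \<Rightarrow> 'a) \<Rightarrow> 'a set \<Rightarrow> bool" where
  "nilpotent_ideal br S \<longleftrightarrow> lie_ideal br S \<and> nilpotent_set br S"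

definition is_nilradical :: "('a::real_vector \<Rightarrow> 'a \<Rightarrow> 'a) \<Rightarrow> 'a set \<Rightarrow> bool" where
  "is_nilradical br N \<longleftrightarrow> nilpotent_ideal br N \<and> (\<forall>I. nilpotent_ideal br I \<longrightarrow> I \<subseteq> N)"

text \<open>Metric: nondegenerate symmetric bilinear form, possibly indefinite.\<close>
definition metric :: "('a::real_vector \<Rightarrow> 'a \<Rightarrow> real) \<Rightarrow> bool" where
  "metric g \<longleftrightarrow> bilinear g \<and> (\<forall>x y. g x y = g y x) \<and> (\<forall>x. (\<forall>y. g x y = 0) \<longrightarrow> x = 0)"

text \<open>Levi-Civita connection on left-invariant fields (Koszul formula).\<close>
definition levi_civita :: "('a::real_vector \<Rightarrow> 'a \<Rightarrow> real) \<Rightarrow> ('a \<Rightarrow> 'a \<Rightarrow> 'a) \<Rightarrow> 'a \<Rightarrow> 'a \<Rightarrow> 'a" where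
  "levi_civita g br X Y = (THE W. \<forall>Z. 2 * g W Z = g (br X Y) Z - g (br Y Z) X + g (br Z X) Y)"

definition curvature :: "('a::real_vector \<Rightarrow> 'a \<Rightarrow> real) \<Rightarrow> ('a \<Rightarrow> 'a \<Rightarrow> 'a) \<Rightarrow> 'a \<Rightarrow> 'a \<Rightarrow> 'a \<Rightarrow> 'a" where
  "curvature g br X Y Z =
     levi_civita g br X (levi_civita g br Y Z) - levi_civita g br Y (levi_civita g br X Z)
     - levi_civita g br (br X Y) Z"

definition ricci_tensor :: "('a::euclidean_space \<Rightarrow> 'a \<Rightarrow> real) \<Rightarrow> ('a \<Rightarrow> 'a \<Rightarrow> 'a) \<Rightarrow> 'a \<Rightarrow> 'a \<Rightarrow> real" where
  "ricci_tensor g br Y Z = (\<Sum>b\<in>Basis. curvature g br b Y Z \<bullet> b)"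

definition ricci_operator :: "('a::euclidean_space \<Rightarrow> 'a \<Rightarrow> real) \<Rightarrow> ('a \<Rightarrow> 'a \<Rightarrow> 'a) \<Rightarrow> 'a \<Rightarrow> 'a" where
  "ricci_operator g br Y = (THE W. \<forall>Z. g W Z = ricci_tensor g br Y Z)"

definition pseudo_iwasawa ::
  "('a::real_vector \<Rightarrow> 'a \<Rightarrow> real) \<Rightarrow> ('a \<Rightarrow> 'a \<Rightarrow> 'a) \<Rightarrow> 'a set \<Rightarrow> 'a set \<Rightarrow> bool" where
  "pseudo_iwasawa g br n a \<longleftrightarrow>
     nilpotent_ideal br n \<and> lie_subalgebra br a \<and> abelian_set br a \<and>
     n \<inter> a = {0} \<and> n + a = UNIV \<and>
     (\<forall>x\<in>n. \<forall>y\<in>a. g x y = 0) \<and>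
     (\<forall>X\<in>a. \<forall>Y Z. g (br X Y) Z = g Y (br X Z))"

end

theory Submission
  imports Defs
begin

(* For X, Y in a, self-adjointness of ad X and [g~, g~] <= n turn the Koszul formula into
   nabla_X = 0 and nabla_W Y = [W, Y], so ric(X, Y) = -tr(ad Y o ad X) on a.  Write an element
   x of a nilpotent ideal as x = m + X with m in n and X in a.  Both ad Y o ad x and ad Y o ad m
   push the lower central series of a nilpotent ideal one step down, so they are traceless;
   hence lam <X, Y> = ric(X, Y) = 0 for every Y in a.  As a is orthogonal to n and the metric is
   nondegenerate, X = 0, i.e. x lies in n. *)

definition map_trace :: "('a::euclidean_space \<Rightarrow> 'a) \<Rightarrow> real" where
  "map_trace f = (\<Sum>b\<in>Basis. f b \<bullet> b)"

lemma linear_inner_expand: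
  fixes f :: "'a::euclidean_space \<Rightarrow> 'b::real_inner"
  assumes "linear f"
  shows "f x \<bullet> y = (\<Sum>c\<in>Basis. (x \<bullet> c) * (f c \<bullet> y))"
proof -
  have "f x = (\<Sum>c\<in>Basis. (x \<bullet> c) *\<^sub>R f c)"
    by (subst euclidean_representation[symmetric, of x])
       (simp add: linear_sum[OF assms] linear_scale[OF assms])
  then show ?thesis by (simp add: inner_sum_left)
qed

lemma map_trace_comp_commute:
  assumes "linear f" "linear h"
  shows "map_trace (f \<circ> h) = map_trace (h \<circ> f)"
proof -
  have "map_trace (f \<circ> h) = (\<Sum>b\<in>Basis. \<Sum>c\<in>Basis. (h b \<bullet> c) * (f c \<bullet> b))"
    unfolding map_trace_def o_def by (rule sum.cong[OF refl linear_inner_expand[OF assms(1)]])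
  also have "\<dots> = (\<Sum>c\<in>Basis. \<Sum>b\<in>Basis. (f c \<bullet> b) * (h b \<bullet> c))"
    by (subst sum.swap) (simp add: mult.commute)
  also have "\<dots> = map_trace (h \<circ> f)"
    unfolding map_trace_def o_def by (rule sum.cong[OF refl linear_inner_expand[OF assms(2), symmetric]])
  finally show ?thesis .
qed

text \<open>With linear projections p j onto F j, cyclicity of the trace makes
  map_trace (T \<circ> p j) independent of j.\<close>

lemma map_trace_flag_eq_0:
  assumes T: "linear T" and F: "\<And>j. subspace (F j)" "\<And>j. F (Suc j) \<subseteq> F j"
    and F0: "F 0 = UNIV" and Fk: "F k = {0}" and TF: "\<And>j. T ` F j \<subseteq> F (Suc j)"
  shows "map_trace T = 0"
proof -
  have "\<exists>p. range p \<subseteq> F j \<and> linear p \<and> (\<forall>x\<in>F j. p x = x)" for j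
    using linear_exists_left_inverse_on[OF linear_id F(1)] by simp
  then obtain p where p: "\<And>j. range (p j) \<subseteq> F j" "\<And>j. linear (p j)"
    "\<And>j x. x \<in> F j \<Longrightarrow> p j x = x"
    by metis
  have trace_eq: "map_trace (T \<circ> p j) = map_trace T" for j
  proof (induction j)
    case 0
    then show ?case using p(3) F0 by (simp add: o_def)
  next
    case (Suc j)
    have "T (p j x) \<in> F (Suc j)" "p (Suc j) x \<in> F j" for x
      using p(1) TF F(2) by blast+
    then have fix_T: "p (Suc j) \<circ> (T \<circ> p j) = T \<circ> p j"
      and fix_p: "p j \<circ> p (Suc j) = p (Suc j)"
      using p(3) by (simp_all add: fun_eq_iff)
    have "map_trace (T \<circ> p (Suc j)) = map_trace ((T \<circ> p j) \<circ> p (Suc j))"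
      by (simp add: o_assoc[symmetric] fix_p)
    also have "\<dots> = map_trace (p (Suc j) \<circ> (T \<circ> p j))"
      by (rule map_trace_comp_commute[OF linear_compose[OF p(2) T] p(2)])
    also have "\<dots> = map_trace T"
      by (simp only: fix_T Suc.IH)
    finally show ?case .
  qed
  have "p k x = 0" for x
    using p(1)[of k] Fk by blast
  then have "T \<circ> p k = (\<lambda>_. 0)"
    using linear_0[OF T] by (simp add: fun_eq_iff)
  then show ?thesis
    using trace_eq[of k] by (simp add: map_trace_def)
qed

lemma lie_bracket_antisym:
  assumes "lie_algebra br"
  shows "br y x = - br x y"
proof -
  have b: "bilinear br" using assms by (simp add: lie_algebra_def)
  have "br (x + y) (x + y) = 0" "br x x = 0" "br y y = 0"
    using assms by (auto simp: lie_algebra_def)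
  then have "br y x + br x y = 0"
    by (simp add: bilinear_ladd[OF b] bilinear_radd[OF b])
  then show ?thesis by (simp add: eq_neg_iff_add_eq_0)
qed

lemma lower_central_Suc_subset:
  assumes "lie_ideal br J"
  shows "lower_central br J (Suc j) \<subseteq> lower_central br J j"
proof (induction j)
  case 0
  have "{br x y |x y. x \<in> J \<and> y \<in> J} \<subseteq> J" "subspace J"
    using assms by (auto simp: lie_ideal_def)
  then show ?case by (simp add: span_minimal)
next
  case (Suc j)
  then show ?case by (auto intro!: span_mono)
qed

lemma lie_ideal_lower_central:
  assumes L: "lie_algebra br" and J: "lie_ideal br J"
  shows "lie_ideal br (lower_central br J j)"
proof (induction j)
  case 0
  then show ?case using J by simp
next
  case (Suc j)
  have b: "bilinear br" using L by (simp add: lie_algebra_def)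
  define G where "G = {br x y | x y. x \<in> J \<and> y \<in> lower_central br J j}"
  have G_closed: "br u w \<in> span G" if "w \<in> G" for u w
  proof -
    obtain x y where w: "w = br x y" "x \<in> J" "y \<in> lower_central br J j"
      using \<open>w \<in> G\<close> G_def by auto
    have "br u y \<in> lower_central br J j" "subspace (lower_central br J j)"
      using Suc.IH w(3) by (auto simp: lie_ideal_def)
    then have "br y u \<in> lower_central br J j"
      using lie_bracket_antisym[OF L, of y u] by (simp add: subspace_neg)
    then have G1: "br x (br y u) \<in> G" using w(2) G_def by blast
    have "br u x \<in> J" using J w(2) by (simp add: lie_ideal_def)
    then have G2: "br (br u x) y \<in> G" using w(3) G_def by blast
    have jacobi: "br u (br x y) + br x (br y u) + br y (br u x) = 0"
      using L by (simp add: lie_algebra_def)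
    have "br u w = (br u (br x y) + br x (br y u) + br y (br u x)) - br x (br y u) - br y (br u x)"
      using w(1) by simp
    also have "\<dots> = - br x (br y u) + br (br u x) y"
      using jacobi lie_bracket_antisym[OF L, of "br u x" y] by simp
    finally show ?thesis
      using span_add[OF span_neg[OF span_base[OF G1]] span_base[OF G2]] by simp
  qed
  have "subspace {z. br u z \<in> span G}" for u
    unfolding subspace_def
    by (auto simp: bilinear_rzero[OF b] bilinear_radd[OF b] bilinear_rmul[OF b]
        intro: span_add span_scale span_zero)
  then have "br u z \<in> span G" if "z \<in> span G" for u z
    using span_induct[OF that, of "\<lambda>z. br u z \<in> span G"] G_closed by blast
  moreover have "lower_central br J (Suc j) = span G" by (simp add: G_def)
  ultimately show ?case by (simp add: lie_ideal_def)
qed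

definition killing_form :: "('a::euclidean_space \<Rightarrow> 'a \<Rightarrow> 'a) \<Rightarrow> 'a \<Rightarrow> 'a \<Rightarrow> real" where
  "killing_form br x y = map_trace (\<lambda>z. br x (br y z))"

lemma killing_form_diff_right:
  assumes "bilinear br"
  shows "killing_form br y (x - x') = killing_form br y x - killing_form br y x'"
  by (simp add: killing_form_def map_trace_def bilinear_lsub[OF assms] bilinear_rsub[OF assms]
      inner_diff_left sum_subtractf)

lemma killing_form_nilpotent_ideal:
  assumes L: "lie_algebra br" and J: "nilpotent_ideal br J" and x: "x \<in> J"
  shows "killing_form br y x = 0"
proof -
  have b: "bilinear br" and Ji: "lie_ideal br J" using L J
    by (simp_all add: lie_algebra_def nilpotent_ideal_def)
  obtain k where k: "lower_central br J k = {0}"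
    using J by (auto simp: nilpotent_ideal_def nilpotent_set_def)
  have lc: "lie_ideal br (lower_central br J i)" for i
    by (rule lie_ideal_lower_central[OF L Ji])
  define F where "F j = (case j of 0 \<Rightarrow> UNIV | Suc i \<Rightarrow> lower_central br J i)" for j
  have T: "linear (\<lambda>z. br y (br x z))"
    using linear_compose[of "br x" "br y"] b by (simp add: bilinear_def o_def)
  have F: "subspace (F j)" "F (Suc j) \<subseteq> F j" for j
    using lc lower_central_Suc_subset[OF Ji] by (cases j; auto simp: F_def lie_ideal_def simp del: lower_central.simps)+
  have TF: "(\<lambda>z. br y (br x z)) ` F j \<subseteq> F (Suc j)" for j
  proof (cases j)
    case 0
    have "subspace J" "br z x \<in> J" for z
      using Ji x by (auto simp: lie_ideal_def)
    then have "br x z \<in> J" for z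
      by (simp add: lie_bracket_antisym[OF L, of x z] subspace_neg)
    then show ?thesis using 0 lc[of 0] by (auto simp: F_def lie_ideal_def)
  next
    case (Suc i)
    have "br x w \<in> lower_central br J (Suc i)" if "w \<in> lower_central br J i" for w
      using that x by (auto intro: span_base)
    then show ?thesis using Suc lc[of "Suc i"] by (auto simp: F_def lie_ideal_def)
  qed
  have "F 0 = UNIV" "F (Suc k) = {0}" by (simp_all add: F_def k)
  then show ?thesis
    using map_trace_flag_eq_0[where F = F, OF T F _ _ TF] by (simp add: killing_form_def)
qed

lemma metric_eqI:
  assumes g: "metric g" and eq: "\<And>Z. g W Z = g W' Z"
  shows "W = W'"
proof -
  have "bilinear g" using g by (simp add: metric_def)
  then have "g (W - W') Z = 0" for Z
    using eq by (simp add: bilinear_lsub)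
  then show ?thesis using g unfolding metric_def by (metis right_minus_eq)
qed

lemma metric_represents_linear_functional:
  fixes g :: "'a::euclidean_space \<Rightarrow> 'a \<Rightarrow> real"
  assumes g: "metric g" and f: "linear f"
  shows "\<exists>W. \<forall>Z. g W Z = f Z"
proof -
  have b: "bilinear g" using g by (simp add: metric_def)
  define \<Phi> where "\<Phi> W = (\<Sum>b\<in>Basis. g W b *\<^sub>R b)" for W
  have g_eq: "g W Z = \<Phi> W \<bullet> Z" for W Z
  proof -
    have "g W Z = (\<Sum>c\<in>Basis. (Z \<bullet> c) * g W c)"
      using linear_inner_expand[of "g W" Z 1] b by (simp add: bilinear_def)
    then show ?thesis by (simp add: \<Phi>_def inner_sum_right inner_commute mult.commute)
  qed
  have "linear \<Phi>"
    by (rule linearI) (simp_all add: \<Phi>_def bilinear_ladd[OF b] bilinear_lmul[OF b]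
        scaleR_add_left sum.distrib scaleR_sum_right)
  moreover have "inj \<Phi>"
  proof (rule injI)
    fix W W' assume "\<Phi> W = \<Phi> W'"
    then show "W = W'" using metric_eqI[OF g] g_eq by metis
  qed
  ultimately obtain W where "\<Phi> W = adjoint f 1"
    using linear_injective_imp_surjective by (metis surjD)
  then have "g W Z = f Z" for Z
    using g_eq adjoint_works[OF f, of Z 1] by (simp add: inner_commute)
  then show ?thesis by blast
qed

definition koszul :: "('a::real_vector \<Rightarrow> 'a \<Rightarrow> real) \<Rightarrow> ('a \<Rightarrow> 'a \<Rightarrow> 'a) \<Rightarrow> 'a \<Rightarrow> 'a \<Rightarrow> 'a \<Rightarrow> real"
  where "koszul g br X Y Z = g (br X Y) Z - g (br Y Z) X + g (br Z X) Y"

lemma levi_civita_koszul: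
  fixes g :: "'a::euclidean_space \<Rightarrow> 'a \<Rightarrow> real"
  assumes g: "metric g" and b: "bilinear br"
  shows "2 * g (levi_civita g br X Y) Z = koszul g br X Y Z"
proof -
  have gb: "bilinear g" using g by (simp add: metric_def)
  have "linear (\<lambda>Z. koszul g br X Y Z / 2)"
    by (rule linearI) (simp_all add: koszul_def bilinear_radd[OF gb] bilinear_ladd[OF gb]
        bilinear_radd[OF b] bilinear_ladd[OF b] bilinear_rmul[OF gb] bilinear_lmul[OF gb]
        bilinear_rmul[OF b] bilinear_lmul[OF b] field_simps)
  then obtain W where W: "\<forall>Z. g W Z = koszul g br X Y Z / 2"
    using metric_represents_linear_functional[OF g] by blast
  have "\<exists>!W. \<forall>Z. 2 * g W Z = koszul g br X Y Z"
  proof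
    show "\<forall>Z. 2 * g W Z = koszul g br X Y Z" using W by (simp add: mult.commute)
  next
    fix V assume V: "\<forall>Z. 2 * g V Z = koszul g br X Y Z"
    have "g V Z = g W Z" for Z
      using V[rule_format, of Z] W[rule_format, of Z] by linarith
    then show "V = W" by (rule metric_eqI[OF g])
  qed
  then show ?thesis
    unfolding levi_civita_def koszul_def[symmetric] by (rule theI'[THEN spec])
qed

lemma levi_civita_eqI:
  fixes g :: "'a::euclidean_space \<Rightarrow> 'a \<Rightarrow> real"
  assumes g: "metric g" and b: "bilinear br" and V: "\<And>Z. 2 * g V Z = koszul g br X Y Z"
  shows "levi_civita g br X Y = V"
  using metric_eqI[OF g] levi_civita_koszul[OF g b] V by (metis mult_cancel_left zero_neq_numeral)

lemma linear_levi_civita: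
  fixes g :: "'a::euclidean_space \<Rightarrow> 'a \<Rightarrow> real"
  assumes g: "metric g" and b: "bilinear br"
  shows "linear (levi_civita g br X)"
proof (rule linearI)
  have gb: "bilinear g" using g by (simp add: metric_def)
  note lc = levi_civita_koszul[OF g b]
  fix Y Y' :: 'a and c :: real
  show "levi_civita g br X (Y + Y') = levi_civita g br X Y + levi_civita g br X Y'"
  proof (rule levi_civita_eqI[OF g b])
    fix Z
    have "2 * g (levi_civita g br X Y + levi_civita g br X Y') Z =
        2 * g (levi_civita g br X Y) Z + 2 * g (levi_civita g br X Y') Z"
      by (simp add: bilinear_ladd[OF gb])
    also have "\<dots> = koszul g br X (Y + Y') Z"
      by (simp add: lc koszul_def bilinear_radd[OF gb] bilinear_ladd[OF gb]
          bilinear_radd[OF b] bilinear_ladd[OF b])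
    finally show "2 * g (levi_civita g br X Y + levi_civita g br X Y') Z = koszul g br X (Y + Y') Z" .
  qed
  show "levi_civita g br X (c *\<^sub>R Y) = c *\<^sub>R levi_civita g br X Y"
  proof (rule levi_civita_eqI[OF g b])
    fix Z
    have "2 * g (c *\<^sub>R levi_civita g br X Y) Z = c * (2 * g (levi_civita g br X Y) Z)"
      by (simp add: bilinear_lmul[OF gb])
    also have "\<dots> = koszul g br X (c *\<^sub>R Y) Z"
      by (simp add: lc koszul_def bilinear_rmul[OF gb] bilinear_lmul[OF gb]
          bilinear_rmul[OF b] bilinear_lmul[OF b] algebra_simps)
    finally show "2 * g (c *\<^sub>R levi_civita g br X Y) Z = koszul g br X (c *\<^sub>R Y) Z" .
  qed
qed

lemma ricci_operator_metric:
  fixes g :: "'a::euclidean_space \<Rightarrow> 'a \<Rightarrow> real"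
  assumes g: "metric g" and b: "bilinear br"
  shows "g (ricci_operator g br Y) Z = ricci_tensor g br Y Z"
proof -
  have nabla: "linear (levi_civita g br U)" for U by (rule linear_levi_civita[OF g b])
  have "linear (\<lambda>Z. curvature g br c Y Z)" for c
    unfolding curvature_def
    by (intro linear_compose_sub nabla linear_compose[OF nabla nabla, unfolded o_def])
  then have "linear (\<lambda>Z. curvature g br c Y Z \<bullet> c)" for c
    by (simp add: linear_iff inner_add_left)
  then have "linear (ricci_tensor g br Y)"
    unfolding ricci_tensor_def[abs_def] by (intro linear_compose_sum) auto
  then obtain W where "\<forall>Z. g W Z = ricci_tensor g br Y Z"
    using metric_represents_linear_functional[OF g] by blast
  then have "\<exists>!W. \<forall>Z. g W Z = ricci_tensor g br Y Z"
    using metric_eqI[OF g] by metis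
  then show ?thesis unfolding ricci_operator_def by (rule theI'[THEN spec])
qed

context
  fixes br :: "'a::euclidean_space \<Rightarrow> 'a \<Rightarrow> 'a" and g :: "'a \<Rightarrow> 'a \<Rightarrow> real"
    and n a :: "'a set"
  assumes L: "lie_algebra br" and g: "metric g" and iwasawa: "pseudo_iwasawa g br n a"
begin

lemma pseudo_iwasawa_decomp:
  obtains m X where "m \<in> n" "X \<in> a" "x = m + X"
proof -
  have "x \<in> n + a" using iwasawa by (simp add: pseudo_iwasawa_def)
  then show ?thesis using that by (auto elim!: set_plus_elim)
qed

lemma pseudo_iwasawa_bracket_mem: "br Z W \<in> n"
proof -
  have b: "bilinear br" using L by (simp add: lie_algebra_def)
  have n: "subspace n" "\<And>x y. y \<in> n \<Longrightarrow> br x y \<in> n"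
    using iwasawa by (auto simp: pseudo_iwasawa_def nilpotent_ideal_def lie_ideal_def)
  obtain z X where z: "z \<in> n" "X \<in> a" "Z = z + X" by (rule pseudo_iwasawa_decomp)
  obtain w Y where w: "w \<in> n" "Y \<in> a" "W = w + Y" by (rule pseudo_iwasawa_decomp)
  have "br X Y = 0" using iwasawa z w by (simp add: pseudo_iwasawa_def abelian_set_def)
  then have "br Z W = br Z w - br Y z"
    using z w lie_bracket_antisym[OF L, of z Y] by (simp add: bilinear_radd[OF b] bilinear_ladd[OF b])
  then show ?thesis using n z w by (simp add: subspace_diff)
qed

lemma pseudo_iwasawa_skew:
  assumes "X \<in> a"
  shows "g (br Z X) V = - g (br X V) Z"
proof -
  have "g (br X Z) V = g Z (br X V)" "bilinear g" "\<And>x y. g x y = g y x"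
    using iwasawa g assms by (auto simp: pseudo_iwasawa_def metric_def)
  then show ?thesis using lie_bracket_antisym[OF L, of Z X] bilinear_lneg by metis
qed

lemma pseudo_iwasawa_orthogonal:
  assumes "m \<in> n" "X \<in> a"
  shows "g X m = 0"
proof -
  have "g m X = 0" using iwasawa assms by (simp add: pseudo_iwasawa_def)
  then show ?thesis using g by (simp add: metric_def)
qed

lemma pseudo_iwasawa_complement_eq_0:
  assumes "X \<in> a" and orth: "\<And>Y. Y \<in> a \<Longrightarrow> g X Y = 0"
  shows "X = 0"
proof -
  have gb: "bilinear g" using g by (simp add: metric_def)
  have "g X Z = 0" for Z
  proof -
    obtain m Y where "m \<in> n" "Y \<in> a" "Z = m + Y" by (rule pseudo_iwasawa_decomp)
    then show ?thesis
      using orth pseudo_iwasawa_orthogonal[OF _ \<open>X \<in> a\<close>] by (simp add: bilinear_radd[OF gb])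
  qed
  then show ?thesis using g unfolding metric_def by blast
qed

lemma levi_civita_complement_left:
  assumes "X \<in> a"
  shows "levi_civita g br X V = 0"
proof (rule levi_civita_eqI[OF g])
  show "bilinear br" using L by (simp add: lie_algebra_def)
  fix Z
  have "g (br V Z) X = 0"
    using pseudo_iwasawa_orthogonal[OF pseudo_iwasawa_bracket_mem assms] g
    by (simp add: metric_def)
  then show "2 * g 0 Z = koszul g br X V Z"
    using g pseudo_iwasawa_skew[OF assms] by (simp add: koszul_def metric_def bilinear_lzero)
qed

lemma levi_civita_complement_right:
  assumes "Y \<in> a"
  shows "levi_civita g br W Y = br W Y"
proof (rule levi_civita_eqI[OF g])
  show "bilinear br" using L by (simp add: lie_algebra_def)
  fix Z
  have "g (br Z W) Y = 0"
    using pseudo_iwasawa_orthogonal[OF pseudo_iwasawa_bracket_mem assms] g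
    by (simp add: metric_def)
  then show "2 * g (br W Y) Z = koszul g br W Y Z"
    using pseudo_iwasawa_skew[OF assms, of W Z] g by (simp add: koszul_def metric_def)
qed

lemma ricci_tensor_complement:
  assumes "X \<in> a" "Y \<in> a"
  shows "ricci_tensor g br X Y = - killing_form br Y X"
proof -
  have b: "bilinear br" using L by (simp add: lie_algebra_def)
  have "levi_civita g br c 0 = 0" for c
    using linear_0[OF linear_levi_civita[OF g b]] .
  then have "curvature g br c X Y = - br (br c X) Y" for c
    using assms by (simp add: curvature_def levi_civita_complement_left levi_civita_complement_right)
  moreover have "br (br c X) Y = br Y (br X c)" for c
    using lie_bracket_antisym[OF L, of "br c X" Y] lie_bracket_antisym[OF L, of c X]
    by (simp add: bilinear_rneg[OF b])
  ultimately show ?thesis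
    by (simp add: ricci_tensor_def killing_form_def map_trace_def sum_negf)
qed

end

theorem corollary3p11:
  fixes br :: "'a::euclidean_space \<Rightarrow> 'a \<Rightarrow> 'a"
    and g :: "'a \<Rightarrow> 'a \<Rightarrow> real"
    and n a :: "'a set" and lam :: real
  assumes "lie_algebra br" and "solvable_lie br" and "metric g"
    and "\<forall>X. ricci_operator g br X = lam *\<^sub>R X" and "lam \<noteq> 0"
    and "pseudo_iwasawa g br n a"
  shows "is_nilradical br n"
proof -
  note L = assms(1) and g = assms(3) and iwasawa = assms(6)
  have b: "bilinear br" and gb: "bilinear g" and n: "nilpotent_ideal br n"
    using L g iwasawa by (simp_all add: lie_algebra_def metric_def pseudo_iwasawa_def)
  have "x \<in> n" if I: "nilpotent_ideal br I" and x: "x \<in> I" for I x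
  proof -
    obtain m X where mX: "m \<in> n" "X \<in> a" "x = m + X"
      using pseudo_iwasawa_decomp[OF L g iwasawa] .
    have "killing_form br Y X = 0" for Y
      using killing_form_diff_right[OF b, of Y x m] mX(3)
        killing_form_nilpotent_ideal[OF L I x] killing_form_nilpotent_ideal[OF L n mX(1)]
      by simp
    then have "lam * g X Y = 0" if "Y \<in> a" for Y
      using ricci_tensor_complement[OF L g iwasawa mX(2) that] ricci_operator_metric[OF g b, of X Y]
        assms(4) by (simp add: bilinear_lmul[OF gb])
    then have "X = 0"
      using pseudo_iwasawa_complement_eq_0[OF L g iwasawa mX(2)] assms(5) by simp
    then show ?thesis using mX by simp
  qed
  then show ?thesis using n by (simp add: is_nilradical_def subsetI)
qed

end
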